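(* For $n\ge 3$ and $r>0$, let $T_n(r)$ be a regular $n$-gon centered at the origin whose vertices lie at distance $r$ from the origin. Then $P_{\gamma_2}(T_n(r))<\sqrt{2/\pi}$ for every $r>0$ and every $n\ge 3$.
   Context: For a convex set $\Omega\subset\mathbb{R}^2$, its Gaussian perimeter is $P_{\gamma_2}(\Omega)=\frac{1}{2\pi}\int_{\partial\Omega}\exp\left(-\frac{|\mathbf{x}|^2}{2}\right)d\mathcal{H}^1(\mathbf{x})$, where $\mathcal{H}^1$ is the one-dimensional Hausdorff measure. *)

theory Defs
  imports "HOL-Analysis.Analysis"
begin

text \<open>One-dimensional Hausdorff (outer) measure on the plane, via the
  Caratheodory construction with countable covers and the normalisation
  under which H^1 of a segment is its length.\<close>

definition hausdorff1_approx :: "real \<Rightarrow> (real^2) set \<Rightarrow> ennreal" where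
  "hausdorff1_approx \<delta> A =
     (INF C \<in> {C :: nat \<Rightarrow> (real^2) set. A \<subseteq> (\<Union>i. C i) \<and> (\<forall>i. bounded (C i) \<and> diameter (C i) \<le> \<delta>)}.
        (\<Sum>i. ennreal (diameter (C i))))"

definition hausdorff1 :: "(real^2) set \<Rightarrow> ennreal" where
  "hausdorff1 A = (SUP \<delta> \<in> {0<..}. hausdorff1_approx \<delta> A)"

definition H1 :: "(real^2) measure" where
  "H1 = measure_of UNIV (sets borel) hausdorff1"

definition gaussian_perimeter :: "(real^2) set \<Rightarrow> ennreal" where
  "gaussian_perimeter \<Omega> =
     ennreal (1 / (2 * pi)) *
       (\<integral>\<^sup>+ x \<in> frontier \<Omega>. ennreal (exp (- (norm x)\<^sup>2 / 2)) \<partial>H1)"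

definition regular_polygon :: "nat \<Rightarrow> real \<Rightarrow> real \<Rightarrow> (real^2) set" where
  "regular_polygon n r \<theta> =
     convex hull {vector [r * cos (\<theta> + 2 * pi * real k / real n),
                          r * sin (\<theta> + 2 * pi * real k / real n)] | k. k < n}"

end

theory Submission
  imports Defs
begin

text \<open>Every boundary point of the polygon lies on one of its \<open>n\<close> edges, that is on a line at
  distance \<open>d = r cos (pi / n)\<close> from the origin, within distance \<open>h = r sin (pi / n)\<close> of the
  foot of the perpendicular. Cutting each half-edge into \<open>M\<close> pieces of length \<open>h / M\<close>, the
  Gaussian weight on the \<open>j\<close>-th piece is at most \<open>exp (- (d\<^sup>2 + (j h / M)\<^sup>2) / 2)\<close>, and the
  piece has \<open>H\<^sup>1\<close>-measure at most \<open>h / M\<close>. Hence the Gaussian perimeter is at most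
  \<open>n / pi * (\<Sum>j<M. h / M * exp (- (d\<^sup>2 + (j h / M)\<^sup>2) / 2))\<close>. By
  \<open>t * exp (- a t\<^sup>2) \<le> 1 / sqrt (2 e a)\<close> every term is bounded independently of \<open>r\<close>; for
  \<open>n \<ge> 4\<close> the single piece \<open>M = 1\<close> already gives a bound below \<open>sqrt (2 / pi)\<close>, while the
  triangle needs \<open>M = 8\<close> and a numerical evaluation of the eight terms.\<close>

section \<open>Directions in the plane\<close>

definition dir :: "real \<Rightarrow> real^2" where
  "dir \<phi> = vector [cos \<phi>, sin \<phi>]"

lemma inner_vec2: "(x::real^2) \<bullet> y = x$1 * y$1 + x$2 * y$2"
  by (simp add: inner_vec_def sum_2)

lemma norm_sq_vec2: "(norm (x::real^2))\<^sup>2 = (x$1)\<^sup>2 + (x$2)\<^sup>2"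
  using power2_norm_eq_inner[of x] by (simp add: inner_vec2 power2_eq_square)

lemma inner_dir_dir: "dir a \<bullet> dir b = cos (a - b)"
  by (simp add: dir_def inner_vec2 cos_diff)

lemma norm_dir [simp]: "norm (dir a) = 1"
  using inner_dir_dir[of a a] by (simp add: norm_eq_sqrt_inner)

lemma dir_add_int_2pi: "dir (\<phi> + 2 * pi * of_int m) = dir \<phi>"
  by (simp add: dir_def cos_add sin_add)

lemma norm_sq_eq_inner_dir_sq: "(norm z)\<^sup>2 = (dir a \<bullet> z)\<^sup>2 + (dir (a + pi / 2) \<bullet> z)\<^sup>2"
proof -
  have "(cos a * z$1 + sin a * z$2)\<^sup>2 + (- sin a * z$1 + cos a * z$2)\<^sup>2
      = ((cos a)\<^sup>2 + (sin a)\<^sup>2) * ((z$1)\<^sup>2 + (z$2)\<^sup>2)"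
    by algebra
  then show ?thesis
    by (simp add: norm_sq_vec2 inner_vec2 dir_def cos_add sin_add)
qed

lemma exists_polar_vec2:
  fixes a :: "real^2"
  obtains \<phi> where "a = norm a *\<^sub>R dir \<phi>"
proof (cases "a = 0")
  case True
  then show ?thesis using that by simp
next
  case False
  then have \<rho>: "norm a > 0" by simp
  have "(a$1 / norm a)\<^sup>2 + (a$2 / norm a)\<^sup>2 = (norm a)\<^sup>2 / (norm a)\<^sup>2"
    unfolding power_divide add_divide_distrib[symmetric] norm_sq_vec2[of a] ..
  then have "(a$1 / norm a)\<^sup>2 + (a$2 / norm a)\<^sup>2 = 1"
    using \<rho> by simp
  then obtain \<phi> where "a$1 / norm a = cos \<phi>" "a$2 / norm a = sin \<phi>"
    by (rule sincos_total_2pi)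
  then have "a$1 = norm a * cos \<phi>" "a$2 = norm a * sin \<phi>"
    using \<rho> by (auto simp: field_simps)
  then have "a = norm a *\<^sub>R dir \<phi>"
    by (simp add: vec_eq_iff forall_2 dir_def)
  then show ?thesis by (rule that)
qed

lemma dir_in_cone:
  assumes "b \<le> f" "f \<le> b'" "b' - b < pi" "b < b'"
  obtains A B where "A \<ge> 0" "B \<ge> 0" "dir f = A *\<^sub>R dir b + B *\<^sub>R dir b'"
proof
  let ?A = "sin (b' - f) / sin (b' - b)" and ?B = "sin (f - b) / sin (b' - b)"
  have s0: "sin (b' - b) > 0" using assms by (intro sin_gt_zero) auto
  show "?A \<ge> 0" "?B \<ge> 0"
    using assms s0 by (auto intro!: divide_nonneg_pos sin_ge_zero)
  have "sin (b' - f) * cos b + sin (f - b) * cos b' = sin (b' - b) * cos f"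
       "sin (b' - f) * sin b + sin (f - b) * sin b' = sin (b' - b) * sin f"
    by (simp_all add: sin_diff algebra_simps)
  then have "?A * cos b + ?B * cos b' = cos f" "?A * sin b + ?B * sin b' = sin f"
    using s0 by (simp_all add: divide_simps)
  then show "dir f = ?A *\<^sub>R dir b + ?B *\<^sub>R dir b'"
    by (simp add: vec_eq_iff forall_2 dir_def)
qed

section \<open>Chords and their Hausdorff measure\<close>

text \<open>Orthonormality of a frame \<open>(u, w)\<close> is assumed throughout in the Parseval form
  \<open>(norm z)\<^sup>2 = (u \<bullet> z)\<^sup>2 + (w \<bullet> z)\<^sup>2\<close>.\<close>

definition chord :: "real^2 \<Rightarrow> real^2 \<Rightarrow> real \<Rightarrow> real \<Rightarrow> real \<Rightarrow> (real^2) set" where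
  "chord u w d a b = {x. u \<bullet> x = d \<and> a \<le> w \<bullet> x \<and> w \<bullet> x \<le> b}"

lemma interval_grid_cell:
  fixes s L :: real and N :: nat
  assumes N: "N > 0" and s: "0 \<le> s" "s \<le> L"
  obtains i where "i < N" "real i * L / N \<le> s" "s \<le> (real i + 1) * L / N"
proof (cases "s = L")
  case True
  have "real (N - 1) * L \<le> real N * L" using s by (intro mult_right_mono) auto
  then have "real (N - 1) * L / N \<le> L" using N by (simp add: pos_divide_le_eq mult.commute)
  moreover have "(real (N - 1) + 1) * L / N = L" using N by (simp add: of_nat_diff)
  ultimately show ?thesis using True N that[of "N - 1"] by simp
next
  case False
  then have L: "L > 0" and sL: "s < L" using s by auto
  have Np: "real N > 0" using N by simp
  define q where "q = s * N / L"
  have q: "0 \<le> q" "q < N" using s sL L Np by (simp_all add: q_def pos_divide_less_eq)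
  define i where "i = nat \<lfloor>q\<rfloor>"
  have i: "real i \<le> q" "q < real i + 1" using q(1) by (simp_all add: i_def)
  show ?thesis
  proof (rule that)
    show "i < N" using i(1) q(2) by linarith
    have "real i * L \<le> s * N" using i(1) L by (simp add: q_def pos_le_divide_eq)
    then show "real i * L / N \<le> s" using Np by (simp add: pos_divide_le_eq)
    have "s * N < (real i + 1) * L" using i(2) L by (simp add: q_def pos_divide_less_eq)
    then show "s \<le> (real i + 1) * L / N" using Np by (simp add: pos_le_divide_eq)
  qed
qed

lemma chord_subset_UN_pieces:
  assumes "N > 0" "a \<le> b"
  shows "chord u w d a b \<subseteq> (\<Union>j<N. chord u w d (a + real j * (b - a) / N) (a + (real j + 1) * (b - a) / N))"
proof
  fix x assume x: "x \<in> chord u w d a b"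
  then obtain j where "j < N" "real j * (b - a) / N \<le> w \<bullet> x - a" "w \<bullet> x - a \<le> (real j + 1) * (b - a) / N"
    using interval_grid_cell[OF assms(1), of "w \<bullet> x - a" "b - a"] by (auto simp: chord_def)
  then have "x \<in> chord u w d (a + real j * (b - a) / N) (a + (real j + 1) * (b - a) / N)"
    using x by (simp add: chord_def)
  then show "x \<in> (\<Union>j<N. chord u w d (a + real j * (b - a) / N) (a + (real j + 1) * (b - a) / N))"
    using \<open>j < N\<close> by blast
qed

lemma closed_chord: "closed (chord u w d a b)"
proof -
  have "chord u w d a b = {x. u \<bullet> x = d} \<inter> {x. w \<bullet> x \<ge> a} \<inter> {x. w \<bullet> x \<le> b}"
    by (auto simp: chord_def)
  then show ?thesis by (simp add: closed_Int closed_hyperplane closed_halfspace_ge closed_halfspace_le)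
qed

lemma bounded_chord:
  assumes parseval: "\<And>z. (norm z)\<^sup>2 = (u \<bullet> z)\<^sup>2 + (w \<bullet> z)\<^sup>2"
  shows "bounded (chord u w d a b)"
  unfolding bounded_iff
proof (intro exI ballI)
  fix x assume x: "x \<in> chord u w d a b"
  have "(norm x)\<^sup>2 = d\<^sup>2 + (w \<bullet> x)\<^sup>2" using parseval[of x] x by (simp add: chord_def)
  also have "\<dots> \<le> (\<bar>d\<bar> + \<bar>w \<bullet> x\<bar>)\<^sup>2" by (simp add: power2_sum)
  finally have "norm x \<le> \<bar>d\<bar> + \<bar>w \<bullet> x\<bar>" by (rule power2_le_imp_le) simp
  then show "norm x \<le> \<bar>d\<bar> + \<bar>a\<bar> + \<bar>b\<bar>" using x by (auto simp: chord_def)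
qed

lemma diameter_chord_le:
  assumes parseval: "\<And>z. (norm z)\<^sup>2 = (u \<bullet> z)\<^sup>2 + (w \<bullet> z)\<^sup>2" and "a \<le> b"
  shows "diameter (chord u w d a b) \<le> b - a"
proof (rule diameter_le)
  fix x y assume xy: "x \<in> chord u w d a b" "y \<in> chord u w d a b"
  then have "\<bar>w \<bullet> (x - y)\<bar> \<le> b - a" by (auto simp: chord_def inner_diff_right)
  then have "(w \<bullet> (x - y))\<^sup>2 \<le> (b - a)\<^sup>2" by (simp add: abs_le_square_iff[symmetric] assms)
  moreover have "u \<bullet> (x - y) = 0" using xy by (simp add: chord_def inner_diff_right)
  ultimately have "(norm (x - y))\<^sup>2 \<le> (b - a)\<^sup>2" using parseval[of "x - y"] by simp
  then show "norm (x - y) \<le> b - a" by (rule power2_le_imp_le) (use assms in simp)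
qed (use assms in simp)

lemma hausdorff1_le_of_covers:
  assumes "L \<ge> 0"
    and cov: "\<And>N::nat. N > 0 \<Longrightarrow> \<exists>C::nat \<Rightarrow> (real^2) set. A \<subseteq> (\<Union>i<N. C i) \<and> (\<forall>i. bounded (C i) \<and> diameter (C i) \<le> L / N)"
  shows "hausdorff1 A \<le> ennreal L"
  unfolding hausdorff1_def
proof (rule SUP_least)
  fix \<delta> :: real assume "\<delta> \<in> {0<..}"
  then have \<delta>: "\<delta> > 0" by simp
  obtain N :: nat where N: "L / \<delta> < N" using reals_Archimedean2 by blast
  then have N0: "N > 0" using assms(1) \<delta> by (cases N) (auto simp: divide_less_0_iff not_less)
  have LN: "L / N \<le> \<delta>" using N N0 \<delta> by (simp add: pos_divide_less_eq pos_divide_le_eq mult.commute)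
  obtain C where C: "A \<subseteq> (\<Union>i<N. C i)" "\<And>i. bounded (C i)" "\<And>i. diameter (C i) \<le> L / N"
    using cov[OF N0] by blast
  define C' where "C' i = (if i < N then C i else {})" for i
  have "C' \<in> {C. A \<subseteq> (\<Union>i. C i) \<and> (\<forall>i. bounded (C i) \<and> diameter (C i) \<le> \<delta>)}"
    using C LN \<delta> by (auto simp: C'_def intro: order_trans)
  then have "hausdorff1_approx \<delta> A \<le> (\<Sum>i. ennreal (diameter (C' i)))"
    unfolding hausdorff1_approx_def by (rule INF_lower)
  also have "\<dots> = (\<Sum>i<N. ennreal (diameter (C i)))"
    by (subst suminf_finite[of "{..<N}"]) (auto simp: C'_def)
  also have "\<dots> \<le> (\<Sum>i<N. ennreal (L / N))"
    using C(3) by (intro sum_mono ennreal_leI)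
  also have "\<dots> = ennreal L"
    using N0 assms(1) by (simp add: ennreal_of_nat_eq_real_of_nat ennreal_mult'[symmetric])
  finally show "hausdorff1_approx \<delta> A \<le> ennreal L" .
qed

lemma hausdorff1_chord_le:
  assumes parseval: "\<And>z. (norm z)\<^sup>2 = (u \<bullet> z)\<^sup>2 + (w \<bullet> z)\<^sup>2" and "a \<le> b"
  shows "hausdorff1 (chord u w d a b) \<le> ennreal (b - a)"
proof (rule hausdorff1_le_of_covers)
  fix N :: nat assume N: "N > 0"
  define C where "C j = chord u w d (a + real j * (b - a) / N) (a + (real j + 1) * (b - a) / N)" for j
  have "diameter (C j) \<le> (b - a) / N" for j
  proof -
    have "a + real j * (b - a) / N \<le> a + (real j + 1) * (b - a) / N"
      using assms(2) by (simp add: divide_right_mono mult_right_mono)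
    then have "diameter (C j) \<le> a + (real j + 1) * (b - a) / N - (a + real j * (b - a) / N)"
      unfolding C_def by (rule diameter_chord_le[OF parseval])
    also have "\<dots> = (b - a) / N" using N by (simp add: field_simps)
    finally show ?thesis .
  qed
  then show "\<exists>C. chord u w d a b \<subseteq> (\<Union>i<N. C i) \<and> (\<forall>i. bounded (C i) \<and> diameter (C i) \<le> (b - a) / N)"
    using chord_subset_UN_pieces[OF N assms(2)] bounded_chord[OF parseval]
    by (intro exI[of _ C]) (auto simp: C_def)
qed (use assms in simp)

lemma sets_H1: "sets H1 = sets borel"
  unfolding H1_def by (simp add: sets.sigma_sets_eq[of borel, simplified])

lemma measurable_H1_iff: "measurable H1 N = measurable borel N"
  by (rule measurable_cong_sets[OF sets_H1 refl])

lemma chord_in_sets_H1: "chord u w d a b \<in> sets H1"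
  by (simp add: sets_H1 closed_chord borel_closed)

lemma emeasure_H1_le_hausdorff1: "emeasure H1 A \<le> hausdorff1 A"
  unfolding H1_def emeasure_measure_of_conv by auto

lemma nn_integral_subset_UN_le:
  assumes "finite I" "F \<subseteq> (\<Union>i\<in>I. S i)" "\<And>i. i \<in> I \<Longrightarrow> S i \<in> sets M" "f \<in> borel_measurable M"
  shows "(\<integral>\<^sup>+x\<in>F. f x \<partial>M) \<le> (\<Sum>i\<in>I. \<integral>\<^sup>+x\<in>S i. f x \<partial>M)"
proof -
  have "f x * indicator F x \<le> (\<Sum>i\<in>I. f x * indicator (S i) x)" for x
  proof (cases "x \<in> F")
    case True
    then obtain i where "i \<in> I" "x \<in> S i" using assms(2) by blast
    then have "f x * indicator (S i) x \<le> (\<Sum>i\<in>I. f x * indicator (S i) x)"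
      using assms(1) by (intro member_le_sum) auto
    then show ?thesis using True \<open>x \<in> S i\<close> by simp
  qed simp
  then have "(\<integral>\<^sup>+x\<in>F. f x \<partial>M) \<le> (\<integral>\<^sup>+x. (\<Sum>i\<in>I. f x * indicator (S i) x) \<partial>M)"
    by (rule nn_integral_mono)
  also have "\<dots> = (\<Sum>i\<in>I. \<integral>\<^sup>+x\<in>S i. f x \<partial>M)"
    by (rule nn_integral_sum) (use assms in auto)
  finally show ?thesis .
qed

lemma nn_integral_gaussian_chord_le:
  assumes parseval: "\<And>z. (norm z)\<^sup>2 = (u \<bullet> z)\<^sup>2 + (w \<bullet> z)\<^sup>2" and "0 \<le> a" "a \<le> b"
  shows "(\<integral>\<^sup>+x\<in>chord u w d a b. ennreal (exp (- (norm x)\<^sup>2 / 2)) \<partial>H1)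
           \<le> ennreal ((b - a) * exp (- (d\<^sup>2 + a\<^sup>2) / 2))"
proof -
  let ?C = "chord u w d a b" and ?c = "exp (- (d\<^sup>2 + a\<^sup>2) / 2)"
  have "exp (- (norm x)\<^sup>2 / 2) \<le> ?c" if "x \<in> ?C" for x
  proof -
    have "a\<^sup>2 \<le> (w \<bullet> x)\<^sup>2" using that assms(2) by (intro power_mono) (auto simp: chord_def)
    then show ?thesis using parseval[of x] that by (simp add: chord_def)
  qed
  then have "(\<integral>\<^sup>+x\<in>?C. ennreal (exp (- (norm x)\<^sup>2 / 2)) \<partial>H1) \<le> (\<integral>\<^sup>+x. ennreal ?c * indicator ?C x \<partial>H1)"
    by (intro nn_integral_mono) (auto simp: indicator_def ennreal_leI)
  also have "\<dots> = ennreal ?c * emeasure H1 ?C"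
    by (intro nn_integral_cmult_indicator chord_in_sets_H1)
  also have "\<dots> \<le> ennreal ?c * ennreal (b - a)"
    using emeasure_H1_le_hausdorff1 hausdorff1_chord_le[OF parseval assms(3)]
    by (intro mult_left_mono) (auto intro: order_trans)
  also have "\<dots> = ennreal ((b - a) * ?c)"
    using assms by (simp add: ennreal_mult[symmetric] mult.commute)
  finally show ?thesis .
qed

lemma nn_integral_gaussian_chords_le:
  fixes u w :: "'i \<Rightarrow> real^2"
  assumes I: "finite I" and M: "M > 0" and h: "h \<ge> 0"
    and parseval: "\<And>i z. i \<in> I \<Longrightarrow> (norm z)\<^sup>2 = (u i \<bullet> z)\<^sup>2 + (w i \<bullet> z)\<^sup>2"
    and cover: "F \<subseteq> (\<Union>i\<in>I. chord (u i) (w i) d 0 h)"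
  shows "(\<integral>\<^sup>+x\<in>F. ennreal (exp (- (norm x)\<^sup>2 / 2)) \<partial>H1)
           \<le> ennreal (card I * (\<Sum>j<M. h / M * exp (- (d\<^sup>2 + (real j * h / M)\<^sup>2) / 2)))"
proof -
  define C where "C p = chord (u (fst p)) (w (fst p)) d (real (snd p) * h / M) ((real (snd p) + 1) * h / M)" for p
  define t where "t j = h / M * exp (- (d\<^sup>2 + (real j * h / M)\<^sup>2) / 2)" for j :: nat
  have "F \<subseteq> (\<Union>p\<in>I \<times> {..<M}. C p)"
  proof
    fix x assume "x \<in> F"
    then obtain i where i: "i \<in> I" "x \<in> chord (u i) (w i) d 0 h" using cover by blast
    then obtain j where "j < M" "x \<in> C (i, j)"
      using chord_subset_UN_pieces[OF M h, of "u i" "w i" d] by (auto simp: C_def)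
    then show "x \<in> (\<Union>p\<in>I \<times> {..<M}. C p)" using i(1) by blast
  qed
  then have "(\<integral>\<^sup>+x\<in>F. ennreal (exp (- (norm x)\<^sup>2 / 2)) \<partial>H1)
               \<le> (\<Sum>p\<in>I \<times> {..<M}. \<integral>\<^sup>+x\<in>C p. ennreal (exp (- (norm x)\<^sup>2 / 2)) \<partial>H1)"
    using I by (intro nn_integral_subset_UN_le) (auto simp: C_def chord_in_sets_H1 measurable_H1_iff)
  also have "\<dots> \<le> (\<Sum>p\<in>I \<times> {..<M}. ennreal (t (snd p)))"
  proof (intro sum_mono)
    fix p assume p: "p \<in> I \<times> {..<M}"
    have "real (snd p) * h / M \<le> (real (snd p) + 1) * h / M"
      using h by (simp add: divide_right_mono mult_right_mono)
    then have "(\<integral>\<^sup>+x\<in>C p. ennreal (exp (- (norm x)\<^sup>2 / 2)) \<partial>H1)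
                 \<le> ennreal (((real (snd p) + 1) * h / M - real (snd p) * h / M)
                           * exp (- (d\<^sup>2 + (real (snd p) * h / M)\<^sup>2) / 2))"
      unfolding C_def using p h by (intro nn_integral_gaussian_chord_le parseval) auto
    also have "((real (snd p) + 1) * h / M - real (snd p) * h / M) = h / M"
      by (simp add: diff_divide_distrib[symmetric] algebra_simps)
    finally show "(\<integral>\<^sup>+x\<in>C p. ennreal (exp (- (norm x)\<^sup>2 / 2)) \<partial>H1) \<le> ennreal (t (snd p))"
      by (simp add: t_def)
  qed
  also have "\<dots> = ennreal (\<Sum>p\<in>I \<times> {..<M}. t (snd p))"
    using h by (intro sum_ennreal) (simp add: t_def)
  also have "(\<Sum>p\<in>I \<times> {..<M}. t (snd p)) = card I * (\<Sum>j<M. t j)"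
    using sum.cartesian_product[of "\<lambda>i j. t j" "{..<M}" I] by (simp add: split_def)
  finally show ?thesis by (simp add: t_def)
qed

section \<open>Regular polygons\<close>

definition vertex_angle :: "real \<Rightarrow> nat \<Rightarrow> int \<Rightarrow> real" where
  "vertex_angle \<theta> n k = \<theta> + 2 * pi * of_int k / n"

definition edge_angle :: "real \<Rightarrow> nat \<Rightarrow> int \<Rightarrow> real" where
  "edge_angle \<theta> n k = \<theta> + (2 * of_int k + 1) * pi / n"

lemma of_int_div_mod_nat: "real_of_int k = real n * of_int (k div int n) + of_int (k mod int n)"
proof -
  have "real_of_int k = real_of_int (int n * (k div int n) + k mod int n)" by simp
  then show ?thesis by (simp only: of_int_add of_int_mult of_int_of_nat_eq)
qed

lemma vertex_angle_mod:
  "n > 0 \<Longrightarrow> vertex_angle \<theta> n k = vertex_angle \<theta> n (k mod int n) + 2 * pi * of_int (k div int n)"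
  unfolding vertex_angle_def by (subst of_int_div_mod_nat[of k n]) (simp add: field_simps)

lemma edge_angle_mod:
  "n > 0 \<Longrightarrow> edge_angle \<theta> n k = edge_angle \<theta> n (k mod int n) + 2 * pi * of_int (k div int n)"
  unfolding edge_angle_def by (subst of_int_div_mod_nat[of k n]) (simp add: field_simps)

lemma inner_edge_vertex:
  "n > 0 \<Longrightarrow> dir (edge_angle \<theta> n k) \<bullet> dir (vertex_angle \<theta> n j) = cos ((2 * of_int (k - j) + 1) * pi / n)"
proof -
  assume "n > 0"
  then have "edge_angle \<theta> n k - vertex_angle \<theta> n j = (2 * of_int (k - j) + 1) * pi / n"
    by (simp add: edge_angle_def vertex_angle_def field_simps)
  then show ?thesis by (simp add: inner_dir_dir)
qed

lemma edge_angle_bracket: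
  assumes "n > 0"
  obtains k where "edge_angle \<theta> n k \<le> f" "f \<le> edge_angle \<theta> n (k + 1)"
proof -
  define t where "t = (f - \<theta> - pi / n) * n / (2 * pi)"
  have f: "f = \<theta> + pi / n + t * (2 * pi / n)" using assms by (simp add: t_def field_simps)
  have "edge_angle \<theta> n k = \<theta> + pi / n + of_int k * (2 * pi / n)" for k
    using assms by (simp add: edge_angle_def field_simps)
  moreover have "of_int \<lfloor>t\<rfloor> * (2 * pi / n) \<le> t * (2 * pi / n)"
            "t * (2 * pi / n) \<le> (of_int \<lfloor>t\<rfloor> + 1) * (2 * pi / n)"
    by (intro mult_right_mono; simp; linarith)+
  ultimately show ?thesis using that[of "\<lfloor>t\<rfloor>"] f by simp
qed

lemma scaleR_dir_eq_vector: "r *\<^sub>R dir \<phi> = vector [r * cos \<phi>, r * sin \<phi>]"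
  by (simp add: dir_def vec_eq_iff forall_2)

lemma regular_polygon_eq_hull:
  "regular_polygon n r \<theta> = convex hull ((\<lambda>k. r *\<^sub>R dir (vertex_angle \<theta> n k)) ` {0..<int n})"
proof -
  have "{0..<int n} = int ` {..<n}" by (simp add: image_int_atLeastLessThan lessThan_atLeast0)
  then have "(\<lambda>k. r *\<^sub>R dir (vertex_angle \<theta> n k)) ` {0..<int n}
      = (\<lambda>k. vector [r * cos (\<theta> + 2 * pi * real k / real n), r * sin (\<theta> + 2 * pi * real k / real n)]) ` {..<n}"
    by (simp add: image_image scaleR_dir_eq_vector vertex_angle_def)
  also have "\<dots> = {vector [r * cos (\<theta> + 2 * pi * real k / real n), r * sin (\<theta> + 2 * pi * real k / real n)] | k. k < n}"
    by auto
  finally show ?thesis by (simp add: regular_polygon_def)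
qed

lemma convex_regular_polygon: "convex (regular_polygon n r \<theta>)"
  by (simp add: regular_polygon_eq_hull convex_convex_hull)

lemma compact_regular_polygon: "compact (regular_polygon n r \<theta>)"
  unfolding regular_polygon_eq_hull by (intro compact_convex_hull finite_imp_compact) simp

lemma vertex_in_regular_polygon:
  assumes "n > 0"
  shows "r *\<^sub>R dir (vertex_angle \<theta> n k) \<in> regular_polygon n r \<theta>"
proof -
  have "r *\<^sub>R dir (vertex_angle \<theta> n k) = r *\<^sub>R dir (vertex_angle \<theta> n (k mod int n))"
    using assms by (simp add: vertex_angle_mod[of n \<theta> k] dir_add_int_2pi)
  moreover have "k mod int n \<in> {0..<int n}" using assms by simp
  ultimately show ?thesis unfolding regular_polygon_eq_hull by (metis hull_inc imageI)
qed

lemma regular_polygon_subset_cball: "r \<ge> 0 \<Longrightarrow> regular_polygon n r \<theta> \<subseteq> cball 0 r"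
  unfolding regular_polygon_eq_hull by (rule hull_minimal) auto

lemma cos_odd_multiple_le:
  fixes m :: int and n :: nat
  assumes "n \<ge> 1"
  shows "cos ((2 * of_int m + 1) * pi / n) \<le> cos (pi / n)"
proof -
  define l where "l = (2 * m + 1 + int n) div (2 * int n)"
  define q where "q = (2 * m + 1 + int n) mod (2 * int n) - int n"
  have "2 * int n * l + (q + int n) = 2 * m + 1 + int n"
    by (simp add: l_def q_def)
  then have "2 * m + 1 = 2 * (int n * l) + q" by simp
  then have "q \<noteq> 0" by presburger
  moreover have "\<bar>q\<bar> \<le> int n"
    using assms pos_mod_bound[of "2 * int n" "2 * m + 1 + int n"] pos_mod_sign[of "2 * int n" "2 * m + 1 + int n"]
    unfolding q_def abs_le_iff by linarith
  ultimately have q: "1 \<le> \<bar>real_of_int q\<bar>" "\<bar>real_of_int q\<bar> \<le> real n" by linarith+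
  have "(2 * of_int m + 1) * pi / n = of_int q * pi / n + 2 * pi * of_int l"
  proof -
    have "(2 * of_int m + 1 :: real) = 2 * real n * of_int l + of_int q"
      using arg_cong[OF \<open>2 * m + 1 = _\<close>, of real_of_int] by simp
    then show ?thesis using assms by (simp add: field_simps)
  qed
  then have "cos ((2 * of_int m + 1) * pi / n) = cos (\<bar>of_int q\<bar> * pi / n)"
    by (cases "q \<ge> 0") (simp_all add: cos_add minus_divide_left[symmetric])
  also have "\<dots> \<le> cos (pi / n)"
    using q assms by (intro cos_monotone_0_pi_le) (auto simp: divide_right_mono divide_le_eq)
  finally show ?thesis .
qed

lemma regular_polygon_subset_halfplane:
  assumes "n \<ge> 1" "r \<ge> 0"
  shows "regular_polygon n r \<theta> \<subseteq> {y. dir (edge_angle \<theta> n k) \<bullet> y \<le> r * cos (pi / n)}"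
  unfolding regular_polygon_eq_hull
proof (rule hull_minimal)
  show "(\<lambda>j. r *\<^sub>R dir (vertex_angle \<theta> n j)) ` {0..<int n} \<subseteq> {y. dir (edge_angle \<theta> n k) \<bullet> y \<le> r * cos (pi / n)}"
  proof
    fix y assume "y \<in> (\<lambda>j. r *\<^sub>R dir (vertex_angle \<theta> n j)) ` {0..<int n}"
    then obtain j where y: "y = r *\<^sub>R dir (vertex_angle \<theta> n j)" by blast
    have "dir (edge_angle \<theta> n k) \<bullet> y = r * cos ((2 * of_int (k - j) + 1) * pi / n)"
      unfolding y using assms by (simp add: inner_edge_vertex)
    also have "\<dots> \<le> r * cos (pi / n)"
      using assms by (intro mult_left_mono cos_odd_multiple_le) auto
    finally show "y \<in> {y. dir (edge_angle \<theta> n k) \<bullet> y \<le> r * cos (pi / n)}" by simp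
  qed
qed (rule convex_halfspace_le)

lemma supporting_hyperplane_frontier:
  fixes S :: "'a::euclidean_space set"
  assumes "convex S" "closed S" "x \<in> frontier S"
  obtains a where "a \<noteq> 0" "\<And>y. y \<in> S \<Longrightarrow> a \<bullet> y \<le> a \<bullet> x"
proof (cases "aff_dim S = DIM('a)")
  case True
  then have "x \<notin> rel_interior S"
    using assms(3) interior_rel_interior_gen[of S] by (auto simp: frontier_def)
  then obtain a where "a \<noteq> 0" "\<And>y. y \<in> closure S \<Longrightarrow> a \<bullet> x \<le> a \<bullet> y"
    using supporting_hyperplane_relative_frontier[OF assms(1)] assms(3) by (metis frontier_def DiffD1)
  then show ?thesis using that[of "- a"] closure_subset by fastforce
next
  case False
  then have "aff_dim S < DIM('a)" using aff_dim_le_DIM[of S] by linarith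
  then obtain a b where a: "a \<noteq> 0" "S \<subseteq> {x. a \<bullet> x = b}" by (rule aff_lowdim_subset_hyperplane)
  moreover have "x \<in> S" using assms(2,3) by (simp add: frontier_def)
  ultimately have "a \<bullet> y \<le> a \<bullet> x" if "y \<in> S" for y
    using subsetD[OF a(2) that] subsetD[OF a(2) \<open>x \<in> S\<close>] by simp
  then show ?thesis by (rule that[OF a(1)])
qed

lemma frontier_regular_polygon_on_edge_line:
  assumes n: "n \<ge> 3" and r: "r \<ge> 0" and x: "x \<in> frontier (regular_polygon n r \<theta>)"
  obtains k where "dir (edge_angle \<theta> n k) \<bullet> x = r * cos (pi / n)"
proof -
  let ?P = "regular_polygon n r \<theta>" and ?d = "r * cos (pi / n)"
  let ?e = "\<lambda>k. dir (edge_angle \<theta> n k)"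
  have closed: "closed ?P" by (rule compact_imp_closed[OF compact_regular_polygon])
  then have xP: "x \<in> ?P" using x by (simp add: frontier_def)
  obtain a where a: "a \<noteq> 0" "\<And>y. y \<in> ?P \<Longrightarrow> a \<bullet> y \<le> a \<bullet> x"
    using supporting_hyperplane_frontier[OF convex_regular_polygon closed x] by blast
  \<comment> \<open>The support normal lies between two adjacent edge normals; the support inequality
    at their common vertex then forces \<open>x\<close> onto one of the two edge lines.\<close>
  obtain f where f: "a = norm a *\<^sub>R dir f" by (rule exists_polar_vec2)
  obtain k where k: "edge_angle \<theta> n k \<le> f" "f \<le> edge_angle \<theta> n (k + 1)"
    using edge_angle_bracket[of n] n by auto
  have "edge_angle \<theta> n (k + 1) - edge_angle \<theta> n k = 2 * pi / n"
    using n by (simp add: edge_angle_def field_simps)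
  moreover have "0 < 2 * pi / n" "2 * pi / n < pi" using n by (simp_all add: divide_less_eq)
  ultimately obtain A B where AB: "A \<ge> 0" "B \<ge> 0" "dir f = A *\<^sub>R ?e k + B *\<^sub>R ?e (k + 1)"
    using dir_in_cone[OF k] by auto
  define v where "v = r *\<^sub>R dir (vertex_angle \<theta> n (k + 1))"
  have ev: "?e k \<bullet> v = ?d" "?e (k + 1) \<bullet> v = ?d"
    using n by (simp_all add: v_def inner_edge_vertex)
  have "a \<bullet> v \<le> a \<bullet> x" using n by (intro a(2)) (simp add: v_def vertex_in_regular_polygon)
  then have "dir f \<bullet> v \<le> dir f \<bullet> x" using a(1) by (subst (asm) (1 2) f) simp
  then have le0: "A * (?d - ?e k \<bullet> x) + B * (?d - ?e (k + 1) \<bullet> x) \<le> 0"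
    by (simp add: AB(3) ev inner_add_left) (simp add: algebra_simps)
  have "?e j \<bullet> x \<le> ?d" for j
    using regular_polygon_subset_halfplane[of n r \<theta> j] n r xP by auto
  then have "0 \<le> A * (?d - ?e k \<bullet> x)" "0 \<le> B * (?d - ?e (k + 1) \<bullet> x)"
    using AB(1,2) by simp_all
  then have "A * (?d - ?e k \<bullet> x) = 0" "B * (?d - ?e (k + 1) \<bullet> x) = 0"
    using le0 by linarith+
  moreover have "A \<noteq> 0 \<or> B \<noteq> 0" using AB(3) norm_dir[of f] by auto
  ultimately show ?thesis using that by auto
qed

lemma frontier_regular_polygon_subset_chords:
  assumes n: "n \<ge> 3" and r: "r \<ge> 0"
  shows "frontier (regular_polygon n r \<theta>) \<subseteq> (\<Union>(k, \<sigma>) \<in> {0..<int n} \<times> UNIV.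
           chord (dir (edge_angle \<theta> n k)) ((if \<sigma> then 1 else -1) *\<^sub>R dir (edge_angle \<theta> n k + pi / 2))
             (r * cos (pi / n)) 0 (r * sin (pi / n)))"
proof
  fix x assume x: "x \<in> frontier (regular_polygon n r \<theta>)"
  obtain k0 where k0: "dir (edge_angle \<theta> n k0) \<bullet> x = r * cos (pi / n)"
    using frontier_regular_polygon_on_edge_line[OF n r x] .
  define k where "k = k0 mod int n"
  have k: "k \<in> {0..<int n}" using n by (simp add: k_def)
  have "edge_angle \<theta> n k0 = edge_angle \<theta> n k + 2 * pi * of_int (k0 div int n)"
    unfolding k_def using n by (intro edge_angle_mod) simp
  then have "dir (edge_angle \<theta> n k0) = dir (edge_angle \<theta> n k)"
    by (simp add: dir_add_int_2pi)
  with k0 have normal: "dir (edge_angle \<theta> n k) \<bullet> x = r * cos (pi / n)" by simp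
  define t where "t = dir (edge_angle \<theta> n k + pi / 2) \<bullet> x"
  have "x \<in> regular_polygon n r \<theta>"
    using x compact_imp_closed[OF compact_regular_polygon] by (simp add: frontier_def)
  then have "norm x \<le> r" using regular_polygon_subset_cball[OF r] by (auto simp: subset_iff)
  then have "(norm x)\<^sup>2 \<le> r\<^sup>2" by (simp add: power_mono)
  then have "t\<^sup>2 \<le> r\<^sup>2 - (r * cos (pi / n))\<^sup>2"
    using norm_sq_eq_inner_dir_sq[of x "edge_angle \<theta> n k"] normal by (simp add: t_def)
  also have "\<dots> = (r * sin (pi / n))\<^sup>2"
    by (simp add: power_mult_distrib sin_squared_eq algebra_simps)
  finally have "\<bar>t\<bar>\<^sup>2 \<le> (r * sin (pi / n))\<^sup>2" by simp
  moreover have "0 \<le> r * sin (pi / n)"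
    using r n by (intro mult_nonneg_nonneg sin_ge_zero) (auto simp: divide_le_eq)
  ultimately have "\<bar>t\<bar> \<le> r * sin (pi / n)" by (rule power2_le_imp_le)
  then have "x \<in> chord (dir (edge_angle \<theta> n k)) ((if 0 \<le> t then 1 else -1) *\<^sub>R dir (edge_angle \<theta> n k + pi / 2))
               (r * cos (pi / n)) 0 (r * sin (pi / n))"
    using normal by (cases "0 \<le> t") (simp_all add: chord_def t_def[symmetric])
  then show "x \<in> (\<Union>(k, \<sigma>) \<in> {0..<int n} \<times> UNIV.
           chord (dir (edge_angle \<theta> n k)) ((if \<sigma> then 1 else -1) *\<^sub>R dir (edge_angle \<theta> n k + pi / 2))
             (r * cos (pi / n)) 0 (r * sin (pi / n)))"
    using k by (intro UN_I[of "(k, 0 \<le> t)"]) simp_all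
qed

section \<open>Numerical estimates\<close>

lemma mult_exp_neg_square_le:
  fixes a t :: real
  assumes "a > 0" "t \<ge> 0"
  shows "t * exp (- (a * t\<^sup>2)) \<le> 1 / sqrt (2 * exp 1 * a)"
proof -
  define y where "y = 2 * a * t\<^sup>2"
  have "1 + (y - 1) \<le> exp (y - 1)" by (rule exp_ge_add_one_self)
  then have "y \<le> exp y / exp 1" by (simp add: exp_diff)
  then have "exp 1 * y \<le> exp y" by (simp add: field_simps)
  moreover have "t\<^sup>2 * (2 * exp 1 * a) = exp 1 * y" by (simp add: y_def)
  ultimately have "t\<^sup>2 * (2 * exp 1 * a) \<le> exp y" by linarith
  then have "t\<^sup>2 \<le> exp y / (2 * exp 1 * a)"
    using assms by (simp add: le_divide_eq)
  then have "t\<^sup>2 / exp y \<le> 1 / (2 * exp 1 * a)"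
    using assms by (simp add: divide_le_eq field_simps)
  have "(t * exp (- (a * t\<^sup>2)))\<^sup>2 = t\<^sup>2 / exp y"
    by (simp add: y_def power_mult_distrib exp_minus field_simps power2_eq_square flip: exp_add)
  also have "\<dots> \<le> 1 / (2 * exp 1 * a)" by fact
  also have "\<dots> = (1 / sqrt (2 * exp 1 * a))\<^sup>2"
    using assms by (simp add: power_divide)
  finally show ?thesis
    by (rule power2_le_imp_le) (use assms in simp)
qed

lemma gaussian_edge_sum_le:
  fixes M :: nat
  assumes "M > 0" "c > 0" "s \<ge> 0" "r \<ge> 0"
  shows "(\<Sum>j<M. r * s / M * exp (- ((r * c)\<^sup>2 + (real j * (r * s) / M)\<^sup>2) / 2))
           \<le> s / M * (\<Sum>j<M. 1 / sqrt (exp 1 * (c\<^sup>2 + (real j * s / M)\<^sup>2)))"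
  unfolding sum_distrib_left
proof (rule sum_mono)
  fix j
  define a where "a = (c\<^sup>2 + (real j * s / M)\<^sup>2) / 2"
  have a: "a > 0" using assms by (simp add: a_def add_pos_nonneg)
  have "r * s / M * exp (- ((r * c)\<^sup>2 + (real j * (r * s) / M)\<^sup>2) / 2) = s / M * (r * exp (- (a * r\<^sup>2)))"
    by (simp add: a_def power_mult_distrib power_divide field_simps)
  also have "\<dots> \<le> s / M * (1 / sqrt (2 * exp 1 * a))"
    using mult_exp_neg_square_le[OF a assms(4)] assms by (intro mult_left_mono) auto
  finally show "r * s / M * exp (- ((r * c)\<^sup>2 + (real j * (r * s) / M)\<^sup>2) / 2)
                  \<le> s / M * (1 / sqrt (exp 1 * (c\<^sup>2 + (real j * s / M)\<^sup>2)))"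
    by (simp add: a_def)
qed

lemma exp1_ge: "2.718 \<le> exp (1::real)"
  using e_approx_32 by (simp add: abs_if split: if_split_asm)

lemma one_div_sqrt_le:
  fixes X Q :: real
  assumes "0 < X" "0 \<le> Q" "1 \<le> Q\<^sup>2 * X"
  shows "1 / sqrt X \<le> Q"
proof -
  have "1\<^sup>2 \<le> (Q * sqrt X)\<^sup>2" using assms by (simp add: power_mult_distrib)
  then have "1 \<le> Q * sqrt X" by (rule power2_le_imp_le) (use assms in simp)
  then show ?thesis using assms by (simp add: divide_le_eq mult.commute)
qed

lemma triangle_numeric_bound:
  "3 / pi * (sin (pi / 3) / 8 * (\<Sum>j<8. 1 / sqrt (exp 1 * ((cos (pi / 3))\<^sup>2 + (real j * sin (pi / 3) / 8)\<^sup>2))))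
     < sqrt (2 / pi)"
proof -
  \<comment> \<open>decimal upper bounds for \<open>1 / sqrt (2.718 * X)\<close>, with \<open>X\<close> as below\<close>
  define Q :: "nat \<Rightarrow> real" where "Q j = [3033/2500, 11857/10000, 11133/10000, 5087/5000,
       9171/10000, 1029/1250, 37/50, 3341/5000] ! j" for j
  have Q: "1 / sqrt (exp 1 * ((cos (pi / 3))\<^sup>2 + (real j * sin (pi / 3) / 8)\<^sup>2)) \<le> Q j" if "j < 8" for j
  proof -
    define X where "X = 1 / 4 + 3 * (real j)\<^sup>2 / 256"
    have X0: "0 < X" by (simp add: X_def add_pos_nonneg)
    have "(cos (pi / 3))\<^sup>2 + (real j * sin (pi / 3) / 8)\<^sup>2 = X"
      by (simp add: X_def cos_60 sin_60 power_mult_distrib power_divide)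
    moreover have "1 / sqrt (exp 1 * X) \<le> 1 / sqrt (2.718 * X)"
      using exp1_ge X0 by (intro divide_left_mono real_sqrt_le_mono mult_right_mono) auto
    moreover have "1 / sqrt (2.718 * X) \<le> Q j"
    proof (rule one_div_sqrt_le)
      have "j = 0 \<or> j = 1 \<or> j = 2 \<or> j = 3 \<or> j = 4 \<or> j = 5 \<or> j = 6 \<or> j = 7" using that by arith
      then show "0 \<le> Q j" "1 \<le> (Q j)\<^sup>2 * (2.718 * X)"
        by (auto simp: Q_def X_def power2_eq_square)
    qed (use X0 in simp)
    ultimately show ?thesis by simp
  qed
  have "(\<Sum>j<8. 1 / sqrt (exp 1 * ((cos (pi / 3))\<^sup>2 + (real j * sin (pi / 3) / 8)\<^sup>2))) \<le> (\<Sum>j<8. Q j)"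
    using Q by (intro sum_mono) auto
  also have "(\<Sum>j<8. Q j) = 76781 / 10000" by (simp add: eval_nat_numeral Q_def)
  finally have "3 / pi * (sin (pi / 3) / 8 * (\<Sum>j<8. 1 / sqrt (exp 1 * ((cos (pi / 3))\<^sup>2 + (real j * sin (pi / 3) / 8)\<^sup>2))))
      \<le> 3 / pi * (sin (pi / 3) / 8 * (76781 / 10000))"
    by (intro mult_left_mono) (auto simp: sin_60)
  also have "\<dots> < sqrt (2 / pi)"
  proof (rule real_less_rsqrt)
    have "(3 / pi * (sin (pi / 3) / 8 * (76781 / 10000)))\<^sup>2 = 27 * (76781 / 10000)\<^sup>2 / (256 * pi\<^sup>2)"
      by (simp add: power_mult_distrib power_divide sin_60)
    also have "\<dots> < 2 / pi"
    proof -
      have "27 * (76781 / 10000)\<^sup>2 < (512::real) * 3.141592653588" by (simp add: power2_eq_square)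
      also have "\<dots> \<le> 512 * pi" using pi_approx(1) by simp
      finally show ?thesis by (simp add: divide_less_eq power2_eq_square field_simps)
    qed
    finally show "(3 / pi * (sin (pi / 3) / 8 * (76781 / 10000)))\<^sup>2 < 2 / pi" .
  qed
  finally show ?thesis .
qed

lemma cos_ge_one_minus_square_half: "1 - x\<^sup>2 / 2 \<le> cos (x::real)"
proof -
  have "(sin (x / 2))\<^sup>2 \<le> (x / 2)\<^sup>2"
    using abs_sin_x_le_abs_x[of "x / 2"] by (metis abs_le_square_iff)
  then show ?thesis using cos_double_sin[of "x / 2"] by (simp add: power_divide)
qed

lemma polygon_numeric_bound:
  fixes n :: nat
  assumes "n \<ge> 4"
  shows "n / pi * (sin (pi / n) / sqrt (exp 1 * (cos (pi / n))\<^sup>2)) < sqrt (2 / pi)"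
proof -
  let ?c = "cos (pi / n)" and ?s = "sin (pi / n)"
  have "0 < pi / n" "pi / n < pi / 2" using assms by (simp_all add: divide_less_eq)
  then have c0: "?c > 0" by (intro cos_gt_zero_pi) linarith+
  have key: "(n * ?s)\<^sup>2 < 2 * pi * exp 1 * ?c\<^sup>2"
  proof (cases "n = 4")
    case True
    \<comment> \<open>the estimate \<open>n * sin (pi / n) \<le> pi\<close> used for \<open>n \<ge> 5\<close> would need \<open>pi < exp 1\<close>\<close>
    have "(8::real) < 3.141592653588 * 2.718" by simp
    also have "\<dots> \<le> pi * exp 1" using pi_approx(1) exp1_ge by (intro mult_mono) auto
    finally show ?thesis using True by (simp add: sin_45 cos_45 power_mult_distrib power_divide)
  next
    case False
    then have n5: "real n \<ge> 5" using assms by simp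
    have "?s \<le> pi / n" by (rule sin_x_le_x) simp
    then have "n * ?s \<le> pi" using n5 by (simp add: le_divide_eq mult.commute)
    moreover have "0 \<le> ?s" using n5 by (intro sin_ge_zero) (auto simp: divide_le_eq)
    ultimately have l: "(n * ?s)\<^sup>2 \<le> pi\<^sup>2" by (intro power_mono) auto
    have pi2: "pi\<^sup>2 \<le> 3.1415926535899\<^sup>2" using pi_approx(2) by (intro power_mono) auto
    have "(pi / n)\<^sup>2 \<le> (pi / 5)\<^sup>2" using n5 by (intro power_mono divide_left_mono) auto
    then have "4 / 5 \<le> ?c"
      using cos_ge_one_minus_square_half[of "pi / n"] pi2 by (simp add: power_divide)
    then have "16 / 25 \<le> ?c\<^sup>2" using power_mono[of "4/5" ?c 2] by (simp add: power2_eq_square)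
    then have "2 * 3.141592653588 * 2.718 * (16 / 25) \<le> 2 * pi * exp 1 * ?c\<^sup>2"
      using pi_approx(1) exp1_ge by (intro mult_mono) auto
    moreover have "(3.1415926535899::real)\<^sup>2 < 2 * 3.141592653588 * 2.718 * (16 / 25)"
      by (simp add: power2_eq_square)
    ultimately show ?thesis using l pi2 by linarith
  qed
  show ?thesis
  proof (rule real_less_rsqrt)
    have "(n / pi * (?s / sqrt (exp 1 * ?c\<^sup>2)))\<^sup>2 = (n * ?s)\<^sup>2 / (pi\<^sup>2 * exp 1 * ?c\<^sup>2)"
      by (simp add: power_mult_distrib power_divide)
    also have "\<dots> < (2 * pi * exp 1 * ?c\<^sup>2) / (pi\<^sup>2 * exp 1 * ?c\<^sup>2)"
      using key c0 by (intro divide_strict_right_mono) auto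
    also have "\<dots> = 2 / pi" using c0 by (simp add: power2_eq_square field_simps)
    finally show "(n / pi * (?s / sqrt (exp 1 * ?c\<^sup>2)))\<^sup>2 < 2 / pi" .
  qed
qed

lemma gaussian_edge_sum_bound:
  fixes M n :: nat
  assumes "n \<ge> 3" "r > 0" "M = (if n = 3 then 8 else 1)"
  shows "n / pi * (\<Sum>j<M. r * sin (pi / n) / M
            * exp (- ((r * cos (pi / n))\<^sup>2 + (real j * (r * sin (pi / n)) / M)\<^sup>2) / 2))
           < sqrt (2 / pi)"
proof -
  let ?c = "cos (pi / n)" and ?s = "sin (pi / n)"
  have "0 < pi / n" "pi / n < pi / 2" using assms by (simp_all add: divide_less_eq)
  then have "0 < ?c" by (intro cos_gt_zero_pi) linarith+
  moreover have "0 \<le> ?s" using assms by (intro sin_ge_zero) (auto simp: divide_le_eq)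
  ultimately have "n / pi * (\<Sum>j<M. r * ?s / M * exp (- ((r * ?c)\<^sup>2 + (real j * (r * ?s) / M)\<^sup>2) / 2))
      \<le> n / pi * (?s / M * (\<Sum>j<M. 1 / sqrt (exp 1 * (?c\<^sup>2 + (real j * ?s / M)\<^sup>2))))"
    using assms by (intro mult_left_mono gaussian_edge_sum_le) auto
  also have "\<dots> < sqrt (2 / pi)"
    using assms triangle_numeric_bound polygon_numeric_bound[of n] by (cases "n = 3") simp_all
  finally show ?thesis .
qed

theorem proposition2p3:
  fixes n :: nat and r \<theta> :: real
  assumes "n \<ge> 3" and "r > 0"
  shows "gaussian_perimeter (regular_polygon n r \<theta>) < ennreal (sqrt (2 / pi))"
proof -
  \<comment> \<open>number of pieces per half-edge: the triangle needs a finer subdivision\<close>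
  define M :: nat where "M = (if n = 3 then 8 else 1)"
  define S where "S = (\<Sum>j<M. r * sin (pi / n) / M
                         * exp (- ((r * cos (pi / n))\<^sup>2 + (real j * (r * sin (pi / n)) / M)\<^sup>2) / 2))"
  let ?I = "{0..<int n} \<times> (UNIV :: bool set)"
  let ?u = "\<lambda>(k, \<sigma>::bool). dir (edge_angle \<theta> n k)"
  let ?w = "\<lambda>(k, \<sigma>). (if \<sigma> then 1 else -1) *\<^sub>R dir (edge_angle \<theta> n k + pi / 2)"
  have h: "0 \<le> r * sin (pi / n)"
    using assms by (intro mult_nonneg_nonneg sin_ge_zero) (auto simp: divide_le_eq)
  have parseval: "(norm z)\<^sup>2 = (?u p \<bullet> z)\<^sup>2 + (?w p \<bullet> z)\<^sup>2" for p z
    using norm_sq_eq_inner_dir_sq by (cases p) (simp add: power2_eq_square)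
  have cover: "frontier (regular_polygon n r \<theta>)
                 \<subseteq> (\<Union>p\<in>?I. chord (?u p) (?w p) (r * cos (pi / n)) 0 (r * sin (pi / n)))"
    using frontier_regular_polygon_subset_chords[OF assms(1) less_imp_le[OF assms(2)]]
    by (simp add: case_prod_unfold)
  have "(\<integral>\<^sup>+x\<in>frontier (regular_polygon n r \<theta>). ennreal (exp (- (norm x)\<^sup>2 / 2)) \<partial>H1)
          \<le> ennreal (card ?I * S)"
    unfolding S_def by (rule nn_integral_gaussian_chords_le[OF _ _ h parseval cover]) (simp_all add: M_def)
  then have "gaussian_perimeter (regular_polygon n r \<theta>) \<le> ennreal (1 / (2 * pi)) * ennreal (2 * n * S)"
    unfolding gaussian_perimeter_def by (intro mult_left_mono) (simp_all add: mult.commute)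
  also have "\<dots> = ennreal (n / pi * S)"
    using h by (simp add: S_def ennreal_mult[symmetric] sum_nonneg)
  also have "\<dots> < ennreal (sqrt (2 / pi))"
    using gaussian_edge_sum_bound[OF assms M_def] h by (simp add: S_def ennreal_less_iff sum_nonneg)
  finally show ?thesis .
qed

end
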